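(* Let $(X,\rho)$ be a metric space and let $(A_k)\subset CL(X)$. Then for every unbounded modulus $f\colon[0,\infty)\to[0,\infty)$, the $f$-Wijsman statistical limit of $(A_k)$ is unique if it exists; i.e., if $(A_k)$ is $f$-Wijsman statistically convergent to $A\in CL(X)$ and to $B\in CL(X)$, then $A=B$.
   Context: A modulus is a function $f\colon[0,\infty)\to[0,\infty)$ such that $f(x)=0$ iff $x=0$, $f$ is subadditive, increasing and continuous. $CL(X)$ denotes the set of all non-empty closed subsets of $(X,\rho)$, and $d(x,B)=\inf_{y\in B}\rho(x,y)$. For an unbounded modulus $f$ and $K\subseteq\mathbb N$, the $f$-density is $d^f(K)=\lim_{n\to\infty}\frac{f(|\{k\le n:k\in K\}|)}{f(n)}$ (when the limit exists). A real sequence $(x_k)$ is $f$-statistically convergent to $l$ if for every $\varepsilon>0$ the set $\{k:|x_k-l|\ge\varepsilon\}$ has $f$-density $0$. $(A_k)\subset CL(X)$ is $f$-Wijsman statistically convergent to $A\in CL(X)$ if for every $x\in X$ the sequence $(d(x,A_k))$ is $f$-statistically convergent to $d(x,A)$. *)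

theory Defs
  imports "HOL-Analysis.Analysis"
begin

definition modulus :: "(real \<Rightarrow> real) \<Rightarrow> bool" where
  "modulus f \<longleftrightarrow>
     (\<forall>x\<ge>0. f x \<ge> 0) \<and>
     (\<forall>x\<ge>0. f x = 0 \<longleftrightarrow> x = 0) \<and>
     (\<forall>x\<ge>0. \<forall>y\<ge>0. f (x + y) \<le> f x + f y) \<and>
     (\<forall>x\<ge>0. \<forall>y\<ge>0. x \<le> y \<longrightarrow> f x \<le> f y) \<and>
     continuous_on {0..} f"

definition unbounded_modulus :: "(real \<Rightarrow> real) \<Rightarrow> bool" where
  "unbounded_modulus f \<longleftrightarrow> modulus f \<and> \<not> bdd_above (f ` {0..})"

definition f_density_zero :: "(real \<Rightarrow> real) \<Rightarrow> nat set \<Rightarrow> bool" where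
  "f_density_zero f K \<longleftrightarrow>
     ((\<lambda>n. f (real (card {k. k \<le> n \<and> k \<in> K})) / f (real n)) \<longlonglongrightarrow> 0)"

definition f_stat_conv :: "(real \<Rightarrow> real) \<Rightarrow> (nat \<Rightarrow> real) \<Rightarrow> real \<Rightarrow> bool" where
  "f_stat_conv f x l \<longleftrightarrow> (\<forall>\<epsilon>>0. f_density_zero f {k. \<bar>x k - l\<bar> \<ge> \<epsilon>})"

definition CL :: "'a::metric_space set set" where
  "CL = {A. closed A \<and> A \<noteq> {}}"

definition f_wijsman_stat_conv ::
  "(real \<Rightarrow> real) \<Rightarrow> (nat \<Rightarrow> 'a::metric_space set) \<Rightarrow> 'a set \<Rightarrow> bool" where
  "f_wijsman_stat_conv f As A \<longleftrightarrow> (\<forall>x. f_stat_conv f (\<lambda>k. infdist x (As k)) (infdist x A))"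

end

theory Submission
  imports Defs
begin

text \<open>Two statistical limits l, l' of the same sequence force every index into one of the
  exceptional sets for \<open>\<epsilon> = |l - l'|/2\<close>. Counting up to n, these two sets cover n + 1 indices, so
  monotonicity and subadditivity of f give \<open>f n \<le> f |K\<^sub>1 \<inter> [0,n]| + f |K\<^sub>2 \<inter> [0,n]|\<close>: the two
  density ratios cannot both tend to 0. Hence f-statistical limits are unique, and so are
  f-Wijsman statistical limits, since a closed nonempty set is determined by its distance
  function.\<close>

lemma card_atMost_le_card_cover:
  assumes "K\<^sub>1 \<union> K\<^sub>2 = UNIV"
  shows "n + 1 \<le> card {k. k \<le> n \<and> k \<in> K\<^sub>1} + card {k. k \<le> n \<and> k \<in> K\<^sub>2}"
proof -
  have "{..n} = {k. k \<le> n \<and> k \<in> K\<^sub>1} \<union> {k. k \<le> n \<and> k \<in> K\<^sub>2}"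
    using assms by auto
  then have "card {..n} \<le> card {k. k \<le> n \<and> k \<in> K\<^sub>1} + card {k. k \<le> n \<and> k \<in> K\<^sub>2}"
    by (metis card_Un_le)
  then show ?thesis by simp
qed

lemma not_f_density_zero_cover:
  assumes "modulus f" and "K\<^sub>1 \<union> K\<^sub>2 = UNIV"
  shows "\<not> (f_density_zero f K\<^sub>1 \<and> f_density_zero f K\<^sub>2)"
proof
  assume "f_density_zero f K\<^sub>1 \<and> f_density_zero f K\<^sub>2"
  define c\<^sub>1 where "c\<^sub>1 n = real (card {k. k \<le> n \<and> k \<in> K\<^sub>1})" for n
  define c\<^sub>2 where "c\<^sub>2 n = real (card {k. k \<le> n \<and> k \<in> K\<^sub>2})" for n
  define r where "r n = f (c\<^sub>1 n) / f (real n) + f (c\<^sub>2 n) / f (real n)" for n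
  have "r \<longlonglongrightarrow> 0"
    using \<open>f_density_zero f K\<^sub>1 \<and> f_density_zero f K\<^sub>2\<close> tendsto_add[of _ 0 _ _ 0]
    unfolding f_density_zero_def r_def c\<^sub>1_def c\<^sub>2_def by fastforce
  then have "eventually (\<lambda>n. r n < 1) sequentially"
    by (simp add: order_tendstoD(2))
  moreover have "1 \<le> r n" if "n \<ge> 1" for n
  proof -
    have f_nonneg: "\<And>x. x \<ge> 0 \<Longrightarrow> f x \<ge> 0"
      and f_zero: "\<And>x. x \<ge> 0 \<Longrightarrow> f x = 0 \<longleftrightarrow> x = 0"
      and f_subadd: "\<And>x y. x \<ge> 0 \<Longrightarrow> y \<ge> 0 \<Longrightarrow> f (x + y) \<le> f x + f y"
      and f_mono: "\<And>x y. x \<ge> 0 \<Longrightarrow> x \<le> y \<Longrightarrow> f x \<le> f y"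
      using assms(1) unfolding modulus_def by auto
    have "f (real n) > 0"
      using f_nonneg[of "real n"] f_zero[of "real n"] that by fastforce
    have "f (real n) \<le> f (c\<^sub>1 n + c\<^sub>2 n)"
      using card_atMost_le_card_cover[OF assms(2), of n]
      by (intro f_mono) (auto simp: c\<^sub>1_def c\<^sub>2_def)
    also have "\<dots> \<le> f (c\<^sub>1 n) + f (c\<^sub>2 n)"
      by (intro f_subadd) (auto simp: c\<^sub>1_def c\<^sub>2_def)
    finally show ?thesis
      using \<open>f (real n) > 0\<close> by (simp add: r_def add_divide_distrib[symmetric])
  qed
  then have "eventually (\<lambda>n. 1 \<le> r n) sequentially"
    by (auto simp: eventually_sequentially)
  ultimately have "eventually (\<lambda>_. False) sequentially"
    by eventually_elim simp
  then show False by simp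
qed

lemma f_stat_conv_unique:
  assumes "modulus f" and "f_stat_conv f x l" and "f_stat_conv f x l'"
  shows "l = l'"
proof (rule ccontr)
  assume "l \<noteq> l'"
  define \<epsilon> where "\<epsilon> = \<bar>l - l'\<bar> / 2"
  have "\<epsilon> > 0"
    using \<open>l \<noteq> l'\<close> by (simp add: \<epsilon>_def)
  have "{k. \<bar>x k - l\<bar> \<ge> \<epsilon>} \<union> {k. \<bar>x k - l'\<bar> \<ge> \<epsilon>} = UNIV"
  proof -
    have "\<bar>x k - l\<bar> \<ge> \<epsilon> \<or> \<bar>x k - l'\<bar> \<ge> \<epsilon>" for k
      unfolding \<epsilon>_def by (simp add: abs_if) linarith
    then show ?thesis by blast
  qed
  moreover have "f_density_zero f {k. \<bar>x k - l\<bar> \<ge> \<epsilon>}" "f_density_zero f {k. \<bar>x k - l'\<bar> \<ge> \<epsilon>}"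
    using assms(2,3) \<open>\<epsilon> > 0\<close> unfolding f_stat_conv_def by blast+
  ultimately show False
    using not_f_density_zero_cover[OF assms(1)] by blast
qed

lemma closed_eq_if_infdist_eq:
  fixes A B :: "'a::metric_space set"
  assumes "closed A" "A \<noteq> {}" "closed B" "B \<noteq> {}" and "\<And>x. infdist x A = infdist x B"
  shows "A = B"
proof (intro set_eqI)
  show "x \<in> A \<longleftrightarrow> x \<in> B" for x
    using assms in_closed_iff_infdist_zero by metis
qed

theorem corollary2p4:
  fixes f :: "real \<Rightarrow> real" and As :: "nat \<Rightarrow> 'a::metric_space set" and A B :: "'a set"
  assumes "unbounded_modulus f"
    and "\<forall>k. As k \<in> CL"
    and "A \<in> CL" and "B \<in> CL"
    and "f_wijsman_stat_conv f As A"
    and "f_wijsman_stat_conv f As B"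
  shows "A = B"
proof (rule closed_eq_if_infdist_eq)
  show "closed A" "A \<noteq> {}" "closed B" "B \<noteq> {}"
    using assms(3,4) by (auto simp: CL_def)
  have "modulus f"
    using assms(1) by (simp add: unbounded_modulus_def)
  then show "infdist x A = infdist x B" for x
    using assms(5,6) f_stat_conv_unique unfolding f_wijsman_stat_conv_def by blast
qed

end
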